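(* Let $f:[0,1]\to\mathbb R$ be twice differentiable and suppose there exist constants $0<c_1<c_2$ with $c_1<|f''(x)|<c_2$ for all $x\in[0,1]$. Then $f$ satisfies the uniform nonlinearity (UN) condition.
   Context: For a positive integer $M$ and $k=0,\dots,M-1$ let $I_k=[k/M,(k+1)/M]$ and $m_k=\inf_{a,b\in\mathbb R}\max_{x\in I_k}|f(x)-ax-b|$. A function $f$ satisfies the UN condition if there exists $K>0$ such that for all sufficiently large $M$, $$M\max_{0\le k\le M-1}m_k^2\le K\sum_{k=0}^{M-1}m_k^2 .$$ *)

theory Defs
  imports "HOL-Analysis.Analysis"
begin

definition lin_err :: "(real \<Rightarrow> real) \<Rightarrow> nat \<Rightarrow> nat \<Rightarrow> real" where
  "lin_err f M k =
     (INF ab \<in> (UNIV :: (real \<times> real) set).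
        (SUP x \<in> {real k / real M .. (real k + 1) / real M}.
           \<bar>f x - fst ab * x - snd ab\<bar>))"

definition UN_condition :: "(real \<Rightarrow> real) \<Rightarrow> bool" where
  "UN_condition f \<longleftrightarrow>
     (\<exists>K>0. \<forall>\<^sub>F M in sequentially.
        real M * (MAX k \<in> {..<M}. (lin_err f M k)\<^sup>2)
          \<le> K * (\<Sum>k<M. (lin_err f M k)\<^sup>2))"

end

theory Submission
  imports Defs
begin

text \<open>On an interval [u, v] of length h = 1/M the best affine approximation error of f is
  comparable to h^2 with constants depending only on c1 and c2. It is at most c2 h^2, witnessed
  by the tangent line at u (first order Taylor bound). It is at least c1 h^2/16: an affine
  function does not change the second difference f u + f v - 2 f ((u + v)/2), which is therefore
  bounded by four times the uniform deviation, and which equals (h/2)^2 f'' z for some z by the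
  mean value theorem. So all the m_k lie within the factor 16 c2/c1 of each other, whence
  M max m_k^2 \<le> (16 c2/c1)^2 \<Sum> m_k^2.\<close>

lemma card_mult_Max_square_le_sum_square:
  fixes x :: "'a \<Rightarrow> real"
  assumes "finite A" "A \<noteq> {}" "0 < lo" "\<And>k. k \<in> A \<Longrightarrow> lo \<le> x k \<and> x k \<le> up"
  shows "real (card A) * (MAX k\<in>A. (x k)\<^sup>2) \<le> (up / lo)\<^sup>2 * (\<Sum>k\<in>A. (x k)\<^sup>2)"
proof -
  have sq_bounds: "lo\<^sup>2 \<le> (x k)\<^sup>2 \<and> (x k)\<^sup>2 \<le> up\<^sup>2" if "k \<in> A" for k
    using assms(3) assms(4)[OF that] by (auto intro: power_mono)
  have "(MAX k\<in>A. (x k)\<^sup>2) \<le> up\<^sup>2"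
    using assms(1,2) sq_bounds by (auto intro: Max.boundedI)
  hence "real (card A) * (MAX k\<in>A. (x k)\<^sup>2) \<le> real (card A) * up\<^sup>2"
    by (simp add: mult_left_mono)
  also have "\<dots> = (up / lo)\<^sup>2 * (\<Sum>k\<in>A. lo\<^sup>2)"
    using assms(3) by (simp add: power_divide)
  also have "\<dots> \<le> (up / lo)\<^sup>2 * (\<Sum>k\<in>A. (x k)\<^sup>2)"
    using sq_bounds by (intro mult_left_mono sum_mono) auto
  finally show ?thesis .
qed

lemma UN_conditionI_comparable_errors:
  assumes "0 < a" "a \<le> b"
    and "\<forall>\<^sub>F M in sequentially. 0 < s M \<and>
           (\<forall>k<M. a * s M \<le> lin_err f M k \<and> lin_err f M k \<le> b * s M)"
  shows "UN_condition f"
  unfolding UN_condition_def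
proof (intro exI conjI)
  show "0 < (b / a)\<^sup>2"
    using assms(1,2) by simp
  show "\<forall>\<^sub>F M in sequentially. real M * (MAX k\<in>{..<M}. (lin_err f M k)\<^sup>2)
          \<le> (b / a)\<^sup>2 * (\<Sum>k<M. (lin_err f M k)\<^sup>2)"
    using assms(3) eventually_gt_at_top[of 0]
  proof eventually_elim
    case (elim M)
    then have "real (card {..<M}) * (MAX k\<in>{..<M}. (lin_err f M k)\<^sup>2)
        \<le> (b * s M / (a * s M))\<^sup>2 * (\<Sum>k<M. (lin_err f M k)\<^sup>2)"
      using assms(1) by (intro card_mult_Max_square_le_sum_square) auto
    then show ?case
      using elim by simp
  qed
qed

lemma MVT_has_real_derivative:
  fixes g g' :: "real \<Rightarrow> real"
  assumes "a < b" "continuous_on {a..b} g" "\<And>x. a < x \<Longrightarrow> x < b \<Longrightarrow> DERIV g x :> g' x"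
  shows "\<exists>z\<in>{a<..<b}. g b - g a = (b - a) * g' z"
proof -
  obtain l z where "a < z" "z < b" "DERIV g z :> l" "g b - g a = (b - a) * l"
    using MVT[OF assms(1,2)] assms(3) real_differentiable_def by blast
  then show ?thesis
    using assms(3) DERIV_unique by fastforce
qed

lemma first_order_taylor_bound:
  fixes f f' f'' :: "real \<Rightarrow> real"
  assumes "u \<le> v" "continuous_on {u..v} f" "continuous_on {u..v} f'"
    and "\<And>x. u < x \<Longrightarrow> x < v \<Longrightarrow> DERIV f x :> f' x"
    and "\<And>x. u < x \<Longrightarrow> x < v \<Longrightarrow> DERIV f' x :> f'' x"
    and "\<And>x. u < x \<Longrightarrow> x < v \<Longrightarrow> \<bar>f'' x\<bar> \<le> C"
  shows "\<bar>f v - f u - f' u * (v - u)\<bar> \<le> C * (v - u)\<^sup>2"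
proof (cases "u = v")
  case False
  then have "u < v"
    using assms(1) by simp
  then obtain e where e: "u < e" "e < v" "f v - f u = (v - u) * f' e"
    using MVT_has_real_derivative[of u v f f'] assms(2,4) by auto
  have "continuous_on {u..e} f'"
    using assms(3) e by (auto intro: continuous_on_subset)
  then obtain z where z: "u < z" "z < e" "f' e - f' u = (e - u) * f'' z"
    using MVT_has_real_derivative[of u e f' f''] assms(5) e by auto
  have "f v - f u - f' u * (v - u) = (v - u) * (f' e - f' u)"
    using e(3) by (simp add: algebra_simps)
  also have "\<dots> = (v - u) * (e - u) * f'' z"
    using z(3) by simp
  also have "\<bar>\<dots>\<bar> = (v - u) * (e - u) * \<bar>f'' z\<bar>"
    using e by (simp add: abs_mult)
  also have "\<dots> \<le> (v - u) * (v - u) * C"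
    using e z assms(6)[of z] by (intro mult_mono) auto
  finally show ?thesis
    by (simp add: power2_eq_square algebra_simps)
qed simp

lemma second_difference_MVT:
  fixes f f' f'' :: "real \<Rightarrow> real"
  assumes "u < v" "continuous_on {u..v} f" "continuous_on {u..v} f'"
    and Df: "\<And>x. u < x \<Longrightarrow> x < v \<Longrightarrow> DERIV f x :> f' x"
    and Df': "\<And>x. u < x \<Longrightarrow> x < v \<Longrightarrow> DERIV f' x :> f'' x"
  shows "\<exists>z\<in>{u<..<v}. f u + f v - 2 * f ((u + v) / 2) = ((v - u) / 2)\<^sup>2 * f'' z"
proof -
  define m where "m = (u + v) / 2"
  define h where "h = (v - u) / 2"
  have h: "0 < h" and mh: "m + h = v" "m - h = u"
    using assms(1) by (simp_all add: m_def h_def field_simps)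
  define A where "A = (f u + f v - 2 * f m) / h\<^sup>2"
  \<comment> \<open>A is chosen so that \<psi> h = \<psi> 0 = 0; the mean value theorem then identifies A with a value of f''.\<close>
  define \<psi> where "\<psi> t = f (m + t) + f (m - t) - 2 * f m - A * t\<^sup>2" for t
  have "continuous_on {0..h} \<psi>"
    unfolding \<psi>_def using mh
    by (intro continuous_intros continuous_on_compose2[OF assms(2)]) auto
  moreover have "DERIV \<psi> t :> f' (m + t) - f' (m - t) - 2 * A * t" if "0 < t" "t < h" for t
    unfolding \<psi>_def using that mh
    by (auto intro!: derivative_eq_intros DERIV_chain2[OF Df])
  ultimately obtain \<xi> where \<xi>: "0 < \<xi>" "\<xi> < h"
    and "\<psi> h - \<psi> 0 = (h - 0) * (f' (m + \<xi>) - f' (m - \<xi>) - 2 * A * \<xi>)"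
    using MVT_has_real_derivative[OF h, of \<psi> "\<lambda>t. f' (m + t) - f' (m - t) - 2 * A * t"] by auto
  moreover have "\<psi> h = \<psi> 0"
    using h mh by (simp add: \<psi>_def A_def)
  ultimately have \<xi>_eq: "f' (m + \<xi>) - f' (m - \<xi>) = 2 * A * \<xi>"
    using h by simp
  have "continuous_on {m - \<xi>..m + \<xi>} f'"
    using assms(3) mh \<xi> by (auto intro: continuous_on_subset)
  then obtain z where z: "m - \<xi> < z" "z < m + \<xi>" "f' (m + \<xi>) - f' (m - \<xi>) = 2 * \<xi> * f'' z"
    using MVT_has_real_derivative[of "m - \<xi>" "m + \<xi>" f' f''] Df' mh \<xi> by auto
  have "A = f'' z"
    using \<xi> z(3) \<xi>_eq by simp
  then have "f u + f v - 2 * f m = h\<^sup>2 * f'' z"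
    using h by (simp add: A_def field_simps)
  moreover have "z \<in> {u<..<v}"
    using z \<xi> mh by auto
  ultimately show ?thesis
    unfolding m_def h_def by blast
qed

definition affine_approx_err :: "(real \<Rightarrow> real) \<Rightarrow> real set \<Rightarrow> real" where
  "affine_approx_err f S =
     (INF ab \<in> (UNIV :: (real \<times> real) set). SUP x \<in> S. \<bar>f x - fst ab * x - snd ab\<bar>)"

lemma lin_err_eq_affine_approx_err:
  "lin_err f M k = affine_approx_err f {real k / real M .. (real k + 1) / real M}"
  by (simp add: lin_err_def affine_approx_err_def)

lemma bdd_above_affine_deviation:
  fixes f :: "real \<Rightarrow> real"
  assumes "compact S" "continuous_on S f"
  shows "bdd_above ((\<lambda>x. \<bar>f x - a * x - b\<bar>) ` S)"
proof -
  have "continuous_on S (\<lambda>x. \<bar>f x - a * x - b\<bar>)"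
    by (intro continuous_intros assms(2))
  then show ?thesis
    using assms(1) by (intro bounded_imp_bdd_above compact_imp_bounded compact_continuous_image)
qed

lemma affine_approx_err_le_deviation:
  assumes "compact S" "S \<noteq> {}" "continuous_on S f"
  shows "affine_approx_err f S \<le> (SUP x \<in> S. \<bar>f x - a * x - b\<bar>)"
proof -
  have "0 \<le> (SUP x \<in> S. \<bar>f x - fst ab * x - snd ab\<bar>)" for ab
  proof -
    obtain x where "x \<in> S"
      using assms(2) by blast
    then show ?thesis
      using bdd_above_affine_deviation[OF assms(1,3)] by (meson abs_ge_zero cSUP_upper2)
  qed
  then have "bdd_below ((\<lambda>ab. SUP x \<in> S. \<bar>f x - fst ab * x - snd ab\<bar>) ` UNIV)"
    by (intro bdd_belowI2)
  from cINF_lower[OF this, of "(a, b)"] show ?thesis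
    by (simp add: affine_approx_err_def)
qed

lemma abs_second_difference_le_affine_approx_err:
  assumes "u \<le> v" "continuous_on {u..v} f"
  shows "\<bar>f u + f v - 2 * f ((u + v) / 2)\<bar> \<le> 4 * affine_approx_err f {u..v}"
proof -
  let ?m = "(u + v) / 2"
  have "\<bar>f u + f v - 2 * f ?m\<bar> / 4 \<le> (SUP x \<in> {u..v}. \<bar>f x - a * x - b\<bar>)" for a b
  proof -
    define S where "S = (SUP x \<in> {u..v}. \<bar>f x - a * x - b\<bar>)"
    have dev: "\<bar>f x - a * x - b\<bar> \<le> S" if "x \<in> {u..v}" for x
      unfolding S_def using bdd_above_affine_deviation[OF compact_Icc assms(2)] that
      by (rule cSUP_upper2) simp
    define p q r where "p = f u - a * u - b" and "q = f v - a * v - b" and "r = f ?m - a * ?m - b"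
    have "\<bar>p\<bar> \<le> S" "\<bar>q\<bar> \<le> S" "\<bar>r\<bar> \<le> S"
      unfolding p_def q_def r_def using dev[of u] dev[of v] dev[of ?m] assms(1) by simp_all
    then have "\<bar>p + q - 2 * r\<bar> / 4 \<le> S"
      by (simp add: abs_le_iff)
    moreover have "f u + f v - 2 * f ?m = p + q - 2 * r"
      by (simp add: p_def q_def r_def algebra_simps)
    ultimately show ?thesis
      using S_def by simp
  qed
  then have "\<bar>f u + f v - 2 * f ?m\<bar> / 4 \<le> affine_approx_err f {u..v}"
    unfolding affine_approx_err_def by (intro cINF_greatest) auto
  then show ?thesis
    by simp
qed

lemma affine_approx_err_bounds:
  fixes f f' f'' :: "real \<Rightarrow> real"
  assumes "u < v" "continuous_on {u..v} f" "continuous_on {u..v} f'"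
    and "\<And>x. u < x \<Longrightarrow> x < v \<Longrightarrow> DERIV f x :> f' x"
    and "\<And>x. u < x \<Longrightarrow> x < v \<Longrightarrow> DERIV f' x :> f'' x"
    and bnd: "\<And>x. u < x \<Longrightarrow> x < v \<Longrightarrow> c \<le> \<bar>f'' x\<bar> \<and> \<bar>f'' x\<bar> \<le> C"
  shows "c / 16 * (v - u)\<^sup>2 \<le> affine_approx_err f {u..v}"
    and "affine_approx_err f {u..v} \<le> C * (v - u)\<^sup>2"
proof -
  obtain z where z: "z \<in> {u<..<v}"
    and second_diff: "f u + f v - 2 * f ((u + v) / 2) = ((v - u) / 2)\<^sup>2 * f'' z"
    using second_difference_MVT[OF assms(1-5)] by blast
  have "c * ((v - u) / 2)\<^sup>2 \<le> ((v - u) / 2)\<^sup>2 * \<bar>f'' z\<bar>"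
    using bnd[of z] z by (simp add: mult.commute mult_left_mono)
  also have "\<dots> = \<bar>f u + f v - 2 * f ((u + v) / 2)\<bar>"
    unfolding second_diff by (simp add: abs_mult)
  also have "\<dots> \<le> 4 * affine_approx_err f {u..v}"
    using assms(1,2) by (intro abs_second_difference_le_affine_approx_err) auto
  finally have "c * ((v - u) / 2)\<^sup>2 \<le> 4 * affine_approx_err f {u..v}" .
  then show "c / 16 * (v - u)\<^sup>2 \<le> affine_approx_err f {u..v}"
    by (simp add: power_divide)
  have "\<bar>f x - f' u * x - (f u - f' u * u)\<bar> \<le> C * (v - u)\<^sup>2" if "x \<in> {u..v}" for x
  proof -
    have "\<bar>f x - f u - f' u * (x - u)\<bar> \<le> C * (x - u)\<^sup>2"
      using that assms(2-5) bnd
      by (intro first_order_taylor_bound[of u x f f' f'']) (auto intro: continuous_on_subset)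
    also have "\<dots> \<le> C * (v - u)\<^sup>2"
      using that z bnd[of z] by (intro mult_left_mono power_mono) auto
    finally show ?thesis
      by (simp add: algebra_simps)
  qed
  then have "(SUP x \<in> {u..v}. \<bar>f x - f' u * x - (f u - f' u * u)\<bar>) \<le> C * (v - u)\<^sup>2"
    using assms(1) by (intro cSUP_least) auto
  with affine_approx_err_le_deviation[of "{u..v}" f "f' u" "f u - f' u * u"]
  show "affine_approx_err f {u..v} \<le> C * (v - u)\<^sup>2"
    using assms(1,2) by simp
qed

lemma lin_err_bounds:
  fixes f f' f'' :: "real \<Rightarrow> real"
  assumes "continuous_on {0..1} f" "continuous_on {0..1} f'"
    and "\<And>x. 0 < x \<Longrightarrow> x < 1 \<Longrightarrow> DERIV f x :> f' x"
    and "\<And>x. 0 < x \<Longrightarrow> x < 1 \<Longrightarrow> DERIV f' x :> f'' x"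
    and "\<And>x. 0 < x \<Longrightarrow> x < 1 \<Longrightarrow> c \<le> \<bar>f'' x\<bar> \<and> \<bar>f'' x\<bar> \<le> C"
    and "k < M"
  shows "c / 16 * (1 / real M)\<^sup>2 \<le> lin_err f M k \<and> lin_err f M k \<le> C * (1 / real M)\<^sup>2"
proof -
  define u v where "u = real k / real M" and "v = (real k + 1) / real M"
  have uv: "0 \<le> u" "u < v" "v \<le> 1" "v - u = 1 / real M"
    using assms(6) by (simp_all add: u_def v_def divide_simps)
  show ?thesis
    unfolding lin_err_eq_affine_approx_err u_def[symmetric] v_def[symmetric] uv(4)[symmetric]
    using uv assms(1-5)
    by (intro conjI affine_approx_err_bounds[of u v f f' f'' c C]) (auto intro: continuous_on_subset)
qed

theorem lemma3p3:
  fixes f f' f'' :: "real \<Rightarrow> real" and c1 c2 :: real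
  assumes f': "\<And>x. x \<in> {0..1} \<Longrightarrow> (f has_real_derivative f' x) (at x within {0..1})"
    and f'': "\<And>x. x \<in> {0..1} \<Longrightarrow> (f' has_real_derivative f'' x) (at x within {0..1})"
    and c: "0 < c1" "c1 < c2"
    and bnd: "\<And>x. x \<in> {0..1} \<Longrightarrow> c1 < \<bar>f'' x\<bar> \<and> \<bar>f'' x\<bar> < c2"
  shows "UN_condition f"
proof (rule UN_conditionI_comparable_errors)
  have "continuous_on {0..1} f" "continuous_on {0..1} f'"
    unfolding continuous_on_eq_continuous_within using f' f'' DERIV_continuous by blast+
  moreover have "DERIV f x :> f' x" "DERIV f' x :> f'' x" if "0 < x" "x < 1" for x
    using f'[of x] f''[of x] at_within_Icc_at[of 0 x 1] that by simp_all
  moreover have "c1 \<le> \<bar>f'' x\<bar> \<and> \<bar>f'' x\<bar> \<le> c2" if "0 < x" "x < 1" for x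
    using bnd[of x] that by simp
  ultimately have "c1 / 16 * (1 / real M)\<^sup>2 \<le> lin_err f M k \<and> lin_err f M k \<le> c2 * (1 / real M)\<^sup>2"
    if "k < M" for M k
    using that by (intro lin_err_bounds[of f f' f'' c1 c2]) auto
  then show "\<forall>\<^sub>F M in sequentially. 0 < (1 / real M)\<^sup>2 \<and>
     (\<forall>k<M. c1 / 16 * (1 / real M)\<^sup>2 \<le> lin_err f M k \<and> lin_err f M k \<le> c2 * (1 / real M)\<^sup>2)"
    by (intro eventually_mono[OF eventually_gt_at_top[of 0]]) auto
qed (use c in auto)

end
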